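(* Let $U$ be a finite set of men and $W_1\subseteq W_2$ finite sets of women with $|W_1|\le|W_2|=|U|$, each man having a strict total order over $W_2$ and each woman a strict total order over $U$. Let $M_1'$ be a stable matching of $(U,W_1)$ and $M_2$ a stable matching of $(U,W_2)$, and let $M_2'$ be the union of: the pairs of $M_1'\cap M_2$; the $M_2$-edges of each path component and each Type I cycle of $G(M_1',M_2)$; the $M_1'$-edges of each Type II cycle of $G(M_1',M_2)$. Then $M_2'$ men-dominates $M_2$.
   Context: A matching is a set of man–woman pairs with each person in at most one pair; a matching is stable if it has no blocking pair $(u,w)\notin M$ with ($u$ unmatched or preferring $w$ to his partner) and ($w$ unmatched or preferring $u$ to her partner). $M$ men-dominates $M'$ if every man's partner in $M$ is at least as good for him as his partner in $M'$. The difference graph $G(M,M')$ has vertex set $U\cup W_2$ and edge set $M\triangle M'$. A cycle $C$ of $G(M_1',M_2)$ is of Type I if every man in $C$ strictly prefers his partner in $M_2$ to his partner in $M_1'$ and every woman in $C$ strictly prefers her partner in $M_1'$ to her partner in $M_2$; of Type II if every man in $C$ strictly prefers his partner in $M_1'$ to his partner in $M_2$ and every woman strictly prefers her partner in $M_2$ to her partner in $M_1'$. *)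

theory Defs
  imports Main
begin

text \<open>A preference of man u is a relation
  prefM u :: 'w \<Rightarrow> 'w \<Rightarrow> bool, where prefM u w w' means u strictly prefers w to w'.
  Similarly prefW w u u' means woman w strictly prefers u to u'.\<close>

definition strict_total_on :: "'a set \<Rightarrow> ('a \<Rightarrow> 'a \<Rightarrow> bool) \<Rightarrow> bool" where
  "strict_total_on A r \<longleftrightarrow>
     (\<forall>x\<in>A. \<not> r x x) \<and>
     (\<forall>x\<in>A. \<forall>y\<in>A. \<forall>z\<in>A. r x y \<longrightarrow> r y z \<longrightarrow> r x z) \<and>
     (\<forall>x\<in>A. \<forall>y\<in>A. x \<noteq> y \<longrightarrow> r x y \<or> r y x)"

definition is_matching :: "'m set \<Rightarrow> 'w set \<Rightarrow> ('m \<times> 'w) set \<Rightarrow> bool" where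
  "is_matching U W M \<longleftrightarrow> M \<subseteq> U \<times> W \<and>
     (\<forall>u w w'. (u, w) \<in> M \<longrightarrow> (u, w') \<in> M \<longrightarrow> w = w') \<and>
     (\<forall>u u' w. (u, w) \<in> M \<longrightarrow> (u', w) \<in> M \<longrightarrow> u = u')"

definition blocking_pair ::
  "('m \<Rightarrow> 'w \<Rightarrow> 'w \<Rightarrow> bool) \<Rightarrow> ('w \<Rightarrow> 'm \<Rightarrow> 'm \<Rightarrow> bool) \<Rightarrow> ('m \<times> 'w) set \<Rightarrow> 'm \<Rightarrow> 'w \<Rightarrow> bool" where
  "blocking_pair prefM prefW M u w \<longleftrightarrow> (u, w) \<notin> M \<and>
     ((\<forall>w'. (u, w') \<notin> M) \<or> (\<exists>w'. (u, w') \<in> M \<and> prefM u w w')) \<and>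
     ((\<forall>u'. (u', w) \<notin> M) \<or> (\<exists>u'. (u', w) \<in> M \<and> prefW w u u'))"

definition stable_matching ::
  "('m \<Rightarrow> 'w \<Rightarrow> 'w \<Rightarrow> bool) \<Rightarrow> ('w \<Rightarrow> 'm \<Rightarrow> 'm \<Rightarrow> bool) \<Rightarrow> 'm set \<Rightarrow> 'w set \<Rightarrow> ('m \<times> 'w) set \<Rightarrow> bool" where
  "stable_matching prefM prefW U W M \<longleftrightarrow> is_matching U W M \<and>
     (\<forall>u\<in>U. \<forall>w\<in>W. \<not> blocking_pair prefM prefW M u w)"

definition men_dominates ::
  "('m \<Rightarrow> 'w \<Rightarrow> 'w \<Rightarrow> bool) \<Rightarrow> 'm set \<Rightarrow> ('m \<times> 'w) set \<Rightarrow> ('m \<times> 'w) set \<Rightarrow> bool" where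
  "men_dominates prefM U M M' \<longleftrightarrow>
     (\<forall>u\<in>U. \<forall>w'. (u, w') \<in> M' \<longrightarrow> (\<exists>w. (u, w) \<in> M \<and> (w = w' \<or> prefM u w w')))"

definition dg_adj :: "('m \<times> 'w) set \<Rightarrow> ('m \<times> 'w) set \<Rightarrow> ('m + 'w) \<Rightarrow> ('m + 'w) \<Rightarrow> bool" where
  "dg_adj M M' x y \<longleftrightarrow> (\<exists>u w. (u, w) \<in> (M - M') \<union> (M' - M) \<and>
      ((x = Inl u \<and> y = Inr w) \<or> (x = Inr w \<and> y = Inl u)))"

definition dg_vertices :: "'m set \<Rightarrow> 'w set \<Rightarrow> ('m + 'w) set" where
  "dg_vertices U W = Inl ` U \<union> Inr ` W"

definition dg_component ::
  "'m set \<Rightarrow> 'w set \<Rightarrow> ('m \<times> 'w) set \<Rightarrow> ('m \<times> 'w) set \<Rightarrow> ('m + 'w) \<Rightarrow> ('m + 'w) set" where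
  "dg_component U W M M' v = {x \<in> dg_vertices U W. (v, x) \<in> {(a, b). dg_adj M M' a b}\<^sup>*}"

definition dg_components ::
  "'m set \<Rightarrow> 'w set \<Rightarrow> ('m \<times> 'w) set \<Rightarrow> ('m \<times> 'w) set \<Rightarrow> ('m + 'w) set set" where
  "dg_components U W M M' = dg_component U W M M' ` dg_vertices U W"

text \<open>The difference graph of two matchings has maximum degree 2, so each component is a
  path or a cycle; a (finite) component is a cycle exactly when every vertex has degree 2.\<close>
definition dg_cycle ::
  "'m set \<Rightarrow> 'w set \<Rightarrow> ('m \<times> 'w) set \<Rightarrow> ('m \<times> 'w) set \<Rightarrow> ('m + 'w) set \<Rightarrow> bool" where
  "dg_cycle U W M M' C \<longleftrightarrow> C \<in> dg_components U W M M' \<and>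
      (\<forall>x\<in>C. card {y. dg_adj M M' x y} = 2)"

definition dg_path ::
  "'m set \<Rightarrow> 'w set \<Rightarrow> ('m \<times> 'w) set \<Rightarrow> ('m \<times> 'w) set \<Rightarrow> ('m + 'w) set \<Rightarrow> bool" where
  "dg_path U W M M' C \<longleftrightarrow> C \<in> dg_components U W M M' \<and> \<not> dg_cycle U W M M' C"

definition typeI_cycle where
  "typeI_cycle prefM prefW U W M1 M2 C \<longleftrightarrow> dg_cycle U W M1 M2 C \<and>
     (\<forall>u w w'. Inl u \<in> C \<longrightarrow> (u, w) \<in> M2 \<longrightarrow> (u, w') \<in> M1 \<longrightarrow> prefM u w w') \<and>
     (\<forall>w u u'. Inr w \<in> C \<longrightarrow> (u', w) \<in> M1 \<longrightarrow> (u, w) \<in> M2 \<longrightarrow> prefW w u' u)"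

definition typeII_cycle where
  "typeII_cycle prefM prefW U W M1 M2 C \<longleftrightarrow> dg_cycle U W M1 M2 C \<and>
     (\<forall>u w w'. Inl u \<in> C \<longrightarrow> (u, w) \<in> M2 \<longrightarrow> (u, w') \<in> M1 \<longrightarrow> prefM u w' w) \<and>
     (\<forall>w u u'. Inr w \<in> C \<longrightarrow> (u', w) \<in> M1 \<longrightarrow> (u, w) \<in> M2 \<longrightarrow> prefW w u u')"

text \<open>An edge (u,w) of the difference
  graph lies in component C iff Inl u \<in> C.\<close>
definition M2_prime where
  "M2_prime prefM prefW U W M1 M2 =
     (M1 \<inter> M2)
     \<union> {(u, w). (u, w) \<in> M2 - M1 \<and> (\<exists>C. dg_path U W M1 M2 C \<and> Inl u \<in> C)}
     \<union> {(u, w). (u, w) \<in> M2 - M1 \<and> (\<exists>C. typeI_cycle prefM prefW U W M1 M2 C \<and> Inl u \<in> C)}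
     \<union> {(u, w). (u, w) \<in> M1 - M2 \<and> (\<exists>C. typeII_cycle prefM prefW U W M1 M2 C \<and> Inl u \<in> C)}"

end

theory Submission
  imports Defs
begin

text \<open>A man in a component of the difference graph either keeps his M2-partner in M2'
  (matched edges, paths, Type I cycles) or receives his M1'-partner, which he prefers on a
  Type II cycle. The content is therefore that every cycle is of Type I or of Type II.
  Call a man on a cycle M2-preferring if he prefers his M2-partner to his M1'-partner.
  Stability of both matchings shows that this property passes from a man u to the
  M1'-partner of the M2-partner of u. This successor map permutes the finitely many men of
  the cycle, so the property is invariant under it in both directions and hence constant
  on the cycle; stability then fixes the women's preferences as well.\<close>

lemma card_le_1_if_all_equal: "(\<And>a b. a \<in> X \<Longrightarrow> b \<in> X \<Longrightarrow> a = b) \<Longrightarrow> card X \<le> 1"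
  by (cases "finite X") (auto simp: card_le_Suc0_iff_eq)

lemma finite_inj_endo_invariant_backward:
  assumes "finite S" "inj_on f S" "f ` S \<subseteq> S" "\<And>x. x \<in> S \<Longrightarrow> P x \<Longrightarrow> P (f x)"
    and "x \<in> S" "P (f x)"
  shows "P x"
proof -
  let ?T = "{x \<in> S. P x}"
  have "f ` ?T = ?T"
    using assms(1-4) by (intro endo_inj_surj) (auto intro: inj_on_subset)
  with assms(5,6) obtain y where "y \<in> ?T" "f x = f y"
    by (metis (no_types, lifting) assms(3) image_iff image_subset_iff mem_Collect_eq)
  with assms(2,5) show ?thesis by (auto dest: inj_onD)
qed

lemma is_matching_man_unique: "is_matching U W M \<Longrightarrow> (u, w) \<in> M \<Longrightarrow> (u, w') \<in> M \<Longrightarrow> w = w'"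
  by (auto simp: is_matching_def)

lemma is_matching_woman_unique: "is_matching U W M \<Longrightarrow> (u, w) \<in> M \<Longrightarrow> (u', w) \<in> M \<Longrightarrow> u = u'"
  by (auto simp: is_matching_def)

lemma stable_matching_no_mutual_preference:
  assumes "stable_matching prefM prefW U W M" "(u, a) \<in> M" "(b, w) \<in> M"
    and "prefM u w a" "prefW w u b" "\<not> prefM u w w"
  shows False
proof -
  have uw: "u \<in> U" "w \<in> W" and match: "is_matching U W M"
    using assms(1-3) by (auto simp: stable_matching_def is_matching_def)
  have "(u, w) \<notin> M"
    using is_matching_man_unique[OF match assms(2)] assms(4,6) by blast
  then have "blocking_pair prefM prefW M u w"
    unfolding blocking_pair_def using assms(2-5) by blast
  with assms(1) uw show False by (auto simp: stable_matching_def)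
qed

lemma dg_adj_commute: "dg_adj M M' = dg_adj M' M"
  by (auto simp: dg_adj_def fun_eq_iff)

lemma dg_adj_Inl: "dg_adj M M' (Inl u) y \<longleftrightarrow> (\<exists>w. y = Inr w \<and> (u, w) \<in> (M - M') \<union> (M' - M))"
  by (auto simp: dg_adj_def)

lemma dg_adj_Inr: "dg_adj M M' (Inr w) y \<longleftrightarrow> (\<exists>u. y = Inl u \<and> (u, w) \<in> (M - M') \<union> (M' - M))"
  by (auto simp: dg_adj_def)

lemma dg_degree_two_man:
  assumes "is_matching U W' M'" "card {y. dg_adj M M' (Inl u) y} = 2"
  shows "\<exists>w. (u, w) \<in> M - M'"
proof (rule ccontr)
  assume "\<nexists>w. (u, w) \<in> M - M'"
  then have "card {y. dg_adj M M' (Inl u) y} \<le> 1"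
    using is_matching_man_unique[OF assms(1)]
    by (intro card_le_1_if_all_equal) (auto simp: dg_adj_Inl)
  with assms(2) show False by simp
qed

lemma dg_degree_two_woman:
  assumes "is_matching U W' M'" "card {y. dg_adj M M' (Inr w) y} = 2"
  shows "\<exists>u. (u, w) \<in> M - M'"
proof (rule ccontr)
  assume "\<nexists>u. (u, w) \<in> M - M'"
  then have "card {y. dg_adj M M' (Inr w) y} \<le> 1"
    using is_matching_woman_unique[OF assms(1)]
    by (intro card_le_1_if_all_equal) (auto simp: dg_adj_Inr)
  with assms(2) show False by simp
qed

lemma dg_component_closed:
  assumes "M \<subseteq> U \<times> W" "M' \<subseteq> U \<times> W" "x \<in> dg_component U W M M' v" "dg_adj M M' x y"
  shows "y \<in> dg_component U W M M' v"
proof -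
  have "y \<in> dg_vertices U W"
    using assms(1,2,4) by (auto simp: dg_adj_def dg_vertices_def)
  with assms(3,4) show ?thesis
    by (auto simp: dg_component_def intro: rtrancl_into_rtrancl)
qed

lemma dg_component_invariant:
  assumes "M \<subseteq> U \<times> W" "M' \<subseteq> U \<times> W" "v \<in> dg_vertices U W"
    and "\<And>x y. x \<in> dg_component U W M M' v \<Longrightarrow> dg_adj M M' x y \<Longrightarrow> Q x = Q y"
    and "x \<in> dg_component U W M M' v"
  shows "Q x = Q v"
proof -
  have "(v, x) \<in> {(a, b). dg_adj M M' a b}\<^sup>*"
    using assms(5) by (simp add: dg_component_def)
  then have "x \<in> dg_component U W M M' v \<and> Q x = Q v"
  proof (induction rule: rtrancl_induct)
    case base
    then show ?case using assms(3) by (simp add: dg_component_def)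
  next
    case (step y z)
    then show ?case using dg_component_closed[OF assms(1,2)] assms(4) by fastforce
  qed
  then show ?thesis ..
qed

locale two_stable_matchings =
  fixes U :: "'m set" and W1 W2 :: "'w set"
    and prefM :: "'m \<Rightarrow> 'w \<Rightarrow> 'w \<Rightarrow> bool" and prefW :: "'w \<Rightarrow> 'm \<Rightarrow> 'm \<Rightarrow> bool"
    and M1 M2 :: "('m \<times> 'w) set"
  assumes finite_men: "finite U" and W1_subset: "W1 \<subseteq> W2"
    and prefM_total: "\<forall>u\<in>U. strict_total_on W2 (prefM u)"
    and prefW_total: "\<forall>w\<in>W2. strict_total_on U (prefW w)"
    and stable1: "stable_matching prefM prefW U W1 M1"
    and stable2: "stable_matching prefM prefW U W2 M2"
begin

lemma matching1: "is_matching U W1 M1" and matching2: "is_matching U W2 M2"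
  using stable1 stable2 by (simp_all add: stable_matching_def)

lemma M1_subset: "M1 \<subseteq> U \<times> W2" and M2_subset: "M2 \<subseteq> U \<times> W2"
  using matching1 matching2 W1_subset by (auto simp: is_matching_def)

lemmas M1_man_unique = is_matching_man_unique[OF matching1]
   and M1_woman_unique = is_matching_woman_unique[OF matching1]
   and M2_man_unique = is_matching_man_unique[OF matching2]
   and M2_woman_unique = is_matching_woman_unique[OF matching2]

lemma prefM_irrefl: "(u, a) \<in> M1 \<union> M2 \<Longrightarrow> w \<in> W2 \<Longrightarrow> \<not> prefM u w w"
  using prefM_total M1_subset M2_subset by (auto simp: strict_total_on_def)

lemma prefM_connex:
  assumes "(u, w) \<in> M1 \<union> M2" "(u, w') \<in> M1 \<union> M2" "w \<noteq> w'"
  shows "prefM u w w' \<or> prefM u w' w"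
proof -
  have "u \<in> U" "w \<in> W2" "w' \<in> W2" using assms(1,2) M1_subset M2_subset by auto
  with prefM_total assms(3) show ?thesis by (auto simp: strict_total_on_def)
qed

lemma prefW_connex:
  assumes "(u, w) \<in> M1 \<union> M2" "(u', w) \<in> M1 \<union> M2" "u \<noteq> u'"
  shows "prefW w u u' \<or> prefW w u' u"
proof -
  have "w \<in> W2" "u \<in> U" "u' \<in> U" using assms(1,2) M1_subset M2_subset by auto
  with prefW_total assms(3) show ?thesis by (auto simp: strict_total_on_def)
qed

lemma no_mutual_preference1:
  "(u, a) \<in> M1 \<Longrightarrow> (b, w) \<in> M1 \<Longrightarrow> prefM u w a \<Longrightarrow> \<not> prefW w u b"
  using stable_matching_no_mutual_preference[OF stable1] prefM_irrefl M1_subset by blast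

lemma no_mutual_preference2:
  "(u, a) \<in> M2 \<Longrightarrow> (b, w) \<in> M2 \<Longrightarrow> prefM u w a \<Longrightarrow> \<not> prefW w u b"
  using stable_matching_no_mutual_preference[OF stable2] prefM_irrefl M2_subset by blast

definition prefers_M2 :: "'m \<Rightarrow> bool" where
  "prefers_M2 u \<longleftrightarrow> (\<forall>w w'. (u, w) \<in> M2 \<longrightarrow> (u, w') \<in> M1 \<longrightarrow> prefM u w w')"

text \<open>Stability of M1 makes w prefer u' to u, and then stability of M2 forbids u' to
  prefer w, his M1-partner, to his M2-partner.\<close>
lemma prefers_M2_successor:
  assumes "prefers_M2 u" "(u, a) \<in> M1" "(u, w) \<in> M2" "(u', w) \<in> M1" "u \<noteq> u'"
  shows "prefers_M2 u'"
  unfolding prefers_M2_def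
proof (intro allI impI)
  fix c a' assume c: "(u', c) \<in> M2" and a': "(u', a') \<in> M1"
  have "a' = w" using a' assms(4) M1_man_unique by blast
  have "prefM u w a" using assms(1-3) by (simp add: prefers_M2_def)
  then have "\<not> prefW w u u'" using no_mutual_preference1 assms(2,4) by blast
  then have w_pref: "prefW w u' u" using prefW_connex assms(3-5) by blast
  have "c \<noteq> w" using c assms(3,5) M2_woman_unique by blast
  have "\<not> prefM u' w c" using no_mutual_preference2[OF c assms(3)] w_pref by blast
  then show "prefM u' c a'" using prefM_connex c assms(4) \<open>c \<noteq> w\<close> \<open>a' = w\<close> by blast
qed

definition successor :: "'m \<Rightarrow> 'm" where
  "successor u = (THE u'. \<exists>w. (u, w) \<in> M2 \<and> (u', w) \<in> M1)"

lemma successor_eq: "(u, w) \<in> M2 \<Longrightarrow> (u', w) \<in> M1 \<Longrightarrow> successor u = u'"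
  unfolding successor_def
  by (rule the_equality) (use M1_woman_unique M2_man_unique in blast)+

end

locale difference_cycle = two_stable_matchings +
  fixes C
  assumes cycle: "dg_cycle U W2 M1 M2 C"
begin

lemma cycle_component: obtains v where "v \<in> dg_vertices U W2" "C = dg_component U W2 M1 M2 v"
  using cycle by (auto simp: dg_cycle_def dg_components_def)

lemma cycle_closed: "x \<in> C \<Longrightarrow> dg_adj M1 M2 x y \<Longrightarrow> y \<in> C"
  using dg_component_closed[OF M1_subset M2_subset] cycle_component by metis

lemma cycle_degree: "x \<in> C \<Longrightarrow> card {y. dg_adj M1 M2 x y} = 2"
  using cycle by (simp add: dg_cycle_def)

lemma cycle_man_M1_edge: "Inl u \<in> C \<Longrightarrow> \<exists>w. (u, w) \<in> M1 - M2"
  using dg_degree_two_man[OF matching2] cycle_degree by blast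

lemma cycle_man_M2_edge: "Inl u \<in> C \<Longrightarrow> \<exists>w. (u, w) \<in> M2 - M1"
  using dg_degree_two_man[OF matching1] cycle_degree dg_adj_commute by metis

lemma cycle_woman_M1_edge: "Inr w \<in> C \<Longrightarrow> \<exists>u. (u, w) \<in> M1 - M2"
  using dg_degree_two_woman[OF matching2] cycle_degree by blast

lemma cycle_woman_M2_edge: "Inr w \<in> C \<Longrightarrow> \<exists>u. (u, w) \<in> M2 - M1"
  using dg_degree_two_woman[OF matching1] cycle_degree dg_adj_commute by metis

lemma cycle_woman_partners:
  assumes "Inr w \<in> C" "(u', w) \<in> M1" "(u, w) \<in> M2"
  shows "u \<noteq> u'" "Inl u \<in> C" "Inl u' \<in> C"
proof -
  obtain a where "(a, w) \<in> M1 - M2" using cycle_woman_M1_edge[OF assms(1)] by blast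
  then show "u \<noteq> u'" using assms(2,3) M1_woman_unique by blast
  then have "(u, w) \<in> M2 - M1" "(u', w) \<in> M1 - M2"
    using assms(2,3) M1_woman_unique M2_woman_unique by blast+
  then show "Inl u \<in> C" "Inl u' \<in> C"
    using cycle_closed[OF assms(1)] by (auto simp: dg_adj_Inr)
qed

lemma cycle_successor:
  assumes "Inl u \<in> C"
  obtains w where "(u, w) \<in> M2" "(successor u, w) \<in> M1" "Inl (successor u) \<in> C" "successor u \<noteq> u"
proof -
  obtain w where w: "(u, w) \<in> M2 - M1" using cycle_man_M2_edge[OF assms] by blast
  then have "Inr w \<in> C" using cycle_closed[OF assms] by (auto simp: dg_adj_Inl)
  then obtain a where a: "(a, w) \<in> M1 - M2" using cycle_woman_M1_edge by blast
  have "(u, w) \<in> M2" "(a, w) \<in> M1" using w a by auto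
  moreover from this have "successor u = a" by (rule successor_eq)
  ultimately show ?thesis
    using that cycle_woman_partners[OF \<open>Inr w \<in> C\<close>] by metis
qed

lemma inj_on_successor: "inj_on successor {u. Inl u \<in> C}"
proof (rule inj_onI)
  fix x y assume "x \<in> {u. Inl u \<in> C}" "y \<in> {u. Inl u \<in> C}" "successor x = successor y"
  then obtain wx wy where "(x, wx) \<in> M2" "(successor x, wx) \<in> M1"
    and "(y, wy) \<in> M2" "(successor x, wy) \<in> M1"
    using cycle_successor by (metis mem_Collect_eq)
  then show "x = y" using M1_man_unique M2_woman_unique by metis
qed

lemma prefers_M2_successor_iff:
  assumes "Inl u \<in> C"
  shows "prefers_M2 (successor u) \<longleftrightarrow> prefers_M2 u"
proof
  let ?S = "{u. Inl u \<in> C}"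
  have forward: "prefers_M2 (successor x)" if "x \<in> ?S" "prefers_M2 x" for x
  proof -
    obtain a where "(x, a) \<in> M1" using cycle_man_M1_edge \<open>x \<in> ?S\<close> by blast
    with that show ?thesis using cycle_successor prefers_M2_successor by (metis mem_Collect_eq)
  qed
  have "finite ?S"
    using finite_men cycle_component
    by (rule finite_subset[rotated]) (auto simp: dg_component_def dg_vertices_def)
  moreover have "successor ` ?S \<subseteq> ?S" using cycle_successor by blast
  ultimately show "prefers_M2 (successor u) \<Longrightarrow> prefers_M2 u"
    using finite_inj_endo_invariant_backward[OF _ inj_on_successor] forward assms by blast
  show "prefers_M2 u \<Longrightarrow> prefers_M2 (successor u)" using forward assms by blast
qed

text \<open>A woman inherits the value of her M2-partner; along an M1-edge (a, w) that partner
  has a as successor.\<close>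
lemma prefers_M2_constant:
  assumes "Inl u \<in> C" "Inl u' \<in> C"
  shows "prefers_M2 u \<longleftrightarrow> prefers_M2 u'"
proof -
  define Q where "Q = case_sum prefers_M2 (\<lambda>w. \<exists>u. (u, w) \<in> M2 \<and> prefers_M2 u)"
  have Q_woman: "Q (Inr w) = prefers_M2 u" if "(u, w) \<in> M2" for u w
    using that M2_woman_unique by (auto simp: Q_def)
  have edge: "Q (Inl a) = Q (Inr w)"
    if w: "Inr w \<in> C" and aw: "(a, w) \<in> M1 - M2 \<union> (M2 - M1)" for a w
  proof (cases "(a, w) \<in> M2")
    case True
    then show ?thesis using Q_woman by (simp add: Q_def)
  next
    case False
    obtain c where c: "(c, w) \<in> M2 - M1" using cycle_woman_M2_edge[OF w] by blast
    then have "Inl c \<in> C" using cycle_closed[OF w] by (auto simp: dg_adj_Inr)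
    moreover have "successor c = a" using c aw False successor_eq by blast
    ultimately show ?thesis using prefers_M2_successor_iff c Q_woman by (auto simp: Q_def)
  qed
  obtain v where v: "v \<in> dg_vertices U W2" "C = dg_component U W2 M1 M2 v"
    by (rule cycle_component)
  have "Q x = Q y" if "x \<in> C" "dg_adj M1 M2 x y" for x y
    using that cycle_closed[OF that] edge by (auto simp: dg_adj_def)
  then have "Q x = Q v" if "x \<in> C" for x
    using dg_component_invariant[OF M1_subset M2_subset v(1)] v(2) that by blast
  from this[OF assms(1)] this[OF assms(2)] show ?thesis by (simp add: Q_def)
qed

lemma typeI_if_prefers_M2:
  assumes "\<And>u. Inl u \<in> C \<Longrightarrow> prefers_M2 u"
  shows "typeI_cycle prefM prefW U W2 M1 M2 C"
proof -
  have "prefW w u' u" if w: "Inr w \<in> C" "(u', w) \<in> M1" "(u, w) \<in> M2" for w u u'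
  proof -
    note partners = cycle_woman_partners[OF w]
    obtain a where a: "(u, a) \<in> M1" using cycle_man_M1_edge partners(2) by blast
    then have "prefM u w a" using assms partners(2) w(3) by (simp add: prefers_M2_def)
    then have "\<not> prefW w u u'" using no_mutual_preference1 a w(2) by blast
    then show ?thesis using prefW_connex w(2,3) partners(1) by blast
  qed
  then show ?thesis using assms cycle by (auto simp: typeI_cycle_def prefers_M2_def)
qed

lemma typeII_if_not_prefers_M2:
  assumes "\<And>u. Inl u \<in> C \<Longrightarrow> \<not> prefers_M2 u"
  shows "typeII_cycle prefM prefW U W2 M1 M2 C"
proof -
  have men: "prefM u w' w" if u: "Inl u \<in> C" "(u, w) \<in> M2" "(u, w') \<in> M1" for u w w'
  proof -
    have "\<not> prefM u w w'"
      using assms[OF u(1)] u(2,3) M1_man_unique M2_man_unique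
      unfolding prefers_M2_def by metis
    moreover have "w \<noteq> w'"
      using cycle_man_M2_edge[OF u(1)] u(2,3) M2_man_unique by blast
    ultimately show ?thesis using prefM_connex u(2,3) by blast
  qed
  have "prefW w u u'" if w: "Inr w \<in> C" "(u', w) \<in> M1" "(u, w) \<in> M2" for w u u'
  proof -
    note partners = cycle_woman_partners[OF w]
    obtain c where c: "(u', c) \<in> M2" using cycle_man_M2_edge partners(3) by blast
    then have "\<not> prefW w u' u" using no_mutual_preference2 men partners(3) w(2,3) by blast
    then show ?thesis using prefW_connex w(2,3) partners(1) by blast
  qed
  with men show ?thesis using cycle by (auto simp: typeII_cycle_def)
qed

lemma typeI_or_typeII:
  "typeI_cycle prefM prefW U W2 M1 M2 C \<or> typeII_cycle prefM prefW U W2 M1 M2 C"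
  using typeI_if_prefers_M2 typeII_if_not_prefers_M2 prefers_M2_constant by blast

end

context two_stable_matchings
begin

lemma cycle_typeI_or_typeII:
  assumes "dg_cycle U W2 M1 M2 C"
  shows "typeI_cycle prefM prefW U W2 M1 M2 C \<or> typeII_cycle prefM prefW U W2 M1 M2 C"
proof -
  interpret difference_cycle U W1 W2 prefM prefW M1 M2 C
    using assms by unfold_locales
  show ?thesis by (rule typeI_or_typeII)
qed

lemma M2_prime_men_dominates: "men_dominates prefM U (M2_prime prefM prefW U W2 M1 M2) M2"
  unfolding men_dominates_def
proof (intro ballI allI impI)
  fix u w' assume "u \<in> U" and uw': "(u, w') \<in> M2"
  define C where "C = dg_component U W2 M1 M2 (Inl u)"
  have "Inl u \<in> dg_vertices U W2" using \<open>u \<in> U\<close> by (simp add: dg_vertices_def)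
  then have C: "C \<in> dg_components U W2 M1 M2" "Inl u \<in> C"
    by (simp_all add: C_def dg_components_def dg_component_def)
  consider "(u, w') \<in> M1" | "dg_path U W2 M1 M2 C"
    | "typeI_cycle prefM prefW U W2 M1 M2 C" | "typeII_cycle prefM prefW U W2 M1 M2 C"
    using C(1) cycle_typeI_or_typeII by (auto simp: dg_path_def)
  then show "\<exists>w. (u, w) \<in> M2_prime prefM prefW U W2 M1 M2 \<and> (w = w' \<or> prefM u w w')"
  proof cases
    case 4
    then have "card {y. dg_adj M1 M2 (Inl u) y} = 2"
      using C(2) by (simp add: typeII_cycle_def dg_cycle_def)
    then obtain a where "(u, a) \<in> M1 - M2" using dg_degree_two_man[OF matching2] by blast
    then show ?thesis using 4 C(2) uw' by (auto simp: M2_prime_def typeII_cycle_def)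
  qed (use C(2) uw' in \<open>auto simp: M2_prime_def\<close>)
qed

end

theorem mainTheorem6:
  fixes U :: "'m set" and W1 W2 :: "'w set"
    and prefM :: "'m \<Rightarrow> 'w \<Rightarrow> 'w \<Rightarrow> bool" and prefW :: "'w \<Rightarrow> 'm \<Rightarrow> 'm \<Rightarrow> bool"
    and M1' M2 :: "('m \<times> 'w) set"
  assumes "finite U" and "finite W2" and "W1 \<subseteq> W2"
    and "card W1 \<le> card W2" and "card W2 = card U"
    and "\<forall>u\<in>U. strict_total_on W2 (prefM u)"
    and "\<forall>w\<in>W2. strict_total_on U (prefW w)"
    and "stable_matching prefM prefW U W1 M1'"
    and "stable_matching prefM prefW U W2 M2"
  shows "men_dominates prefM U (M2_prime prefM prefW U W2 M1' M2) M2"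
proof -
  interpret two_stable_matchings U W1 W2 prefM prefW M1' M2
    using assms by unfold_locales
  show ?thesis by (rule M2_prime_men_dominates)
qed

end
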